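(* Let $X_m$ be a del Pezzo surface ($m\le 6$) and let $\mathbf v$ be a Chern character satisfying the DL condition. Let $\mathcal V$ be a coherent sheaf with $\operatorname{ch}_0(\mathcal V)=\operatorname{ch}_0(\mathbf v)$ and $\nu(\mathcal V)=\nu(\mathbf v)$. If $\mathcal E$ is an exceptional bundle with $r(\mathcal E)<r(\mathbf v)$ and $\mu(\mathbf v)\le\mu(\mathcal E)\le\mu(\mathbf v)+K_{X_m}^2$ such that $\chi(\mathcal E,\mathcal V)\ge0$, or an exceptional bundle with $r(\mathcal E)<r(\mathbf v)$ and $\mu(\mathbf v)-K_{X_m}^2\le\mu(\mathcal E)\le\mu(\mathbf v)$ such that $\chi(\mathcal V,\mathcal E)\ge 0$, then $\Delta(\mathcal V)\le\Delta(\mathbf v)$.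
   Context: $X_m$ is the blowup of $\mathbb P^2$ at $m$ general points. $\nu=\operatorname{ch}_1/\operatorname{ch}_0$, $\Delta=\nu^2/2-\operatorname{ch}_2/\operatorname{ch}_0$, $\mu=\nu.(-K_{X_m})$. $\chi(\mathcal A,\mathcal B)=\sum(-1)^i\dim\operatorname{Ext}^i(\mathcal A,\mathcal B)$, extended to Chern characters by Riemann–Roch. An object $\mathcal E$ is exceptional if $\operatorname{Ext}^0(\mathcal E,\mathcal E)=\mathbb C$ and $\operatorname{Ext}^i(\mathcal E,\mathcal E)=0$ for $i\neq0$. A Chern character (or torsion-free sheaf) $\mathbf v$ satisfies the DL condition if (DL1) $\chi(\mathcal E,\mathbf v)\le 0$ for every exceptional bundle $\mathcal E$ with $r(\mathcal E)<r(\mathbf v)$ and $\mu(\mathbf v)\le\mu(\mathcal E)\le\mu(\mathbf v)+K_{X_m}^2$, and (DL2) $\chi(\mathbf v,\mathcal E)\le0$ for every exceptional bundle $\mathcal E$ with $r(\mathcal E)<r(\mathbf v)$ and $\mu(\mathbf v)-K_{X_m}^2\le\mu(\mathcal E)\le\mu(\mathbf v)$. *)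

theory Defs
  imports Complex_Main
begin

text \<open>Numerical model of the Chern character on X_m, the blowup of P^2 at m general
points.  Pic(X_m) = Z^(m+1) with basis H, E_1, ..., E_m (index 0 is H, index i the
exceptional curve E_i, 1 \<le> i \<le> m); intersection form diag(1,-1,...,-1).
A Chern character is (ch_0, ch_1, ch_2) with ch_0 \<in> Z, ch_1 \<in> Pic, ch_2 rational-valued
(taken real here).\<close>

record chern =
  rk  :: int
  c1  :: "nat \<Rightarrow> int"
  ch2 :: real

definition dotm :: "nat \<Rightarrow> (nat \<Rightarrow> real) \<Rightarrow> (nat \<Rightarrow> real) \<Rightarrow> real" where
  "dotm m a b = a 0 * b 0 - (\<Sum>i=1..m. a i * b i)"

definition canon :: "nat \<Rightarrow> real" where
  "canon i = (if i = 0 then -3 else 1)"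

definition Ksq :: "nat \<Rightarrow> real" where
  "Ksq m = dotm m canon canon"

definition nu :: "chern \<Rightarrow> nat \<Rightarrow> real" where
  "nu v = (\<lambda>i. real_of_int (c1 v i) / real_of_int (rk v))"

definition Delta :: "nat \<Rightarrow> chern \<Rightarrow> real" where
  "Delta m v = dotm m (nu v) (nu v) / 2 - ch2 v / real_of_int (rk v)"

definition mu :: "nat \<Rightarrow> chern \<Rightarrow> real" where
  "mu m v = dotm m (nu v) (\<lambda>i. - canon i)"

text \<open>Euler pairing chi(A,B) = sum (-1)^i dim Ext^i(A,B), via Riemann--Roch:
  chi(A,B) = \<integral> ch(A)^\<or> ch(B) td(X_m), td(X_m) = (1, -K/2, 1).\<close>
definition chi :: "nat \<Rightarrow> chern \<Rightarrow> chern \<Rightarrow> real" where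
  "chi m A B =
     (let rA = real_of_int (rk A); rB = real_of_int (rk B);
          cA = (\<lambda>i. real_of_int (c1 A i)); cB = (\<lambda>i. real_of_int (c1 B i))
      in rA * rB
         + dotm m (\<lambda>i. rA * cB i - rB * cA i) (\<lambda>i. - canon i / 2)
         + rA * ch2 B + rB * ch2 A - dotm m cA cB)"

text \<open>The DL condition, relative to the set Exc of Chern characters of exceptional
bundles on X_m.\<close>
definition DL :: "nat \<Rightarrow> chern set \<Rightarrow> chern \<Rightarrow> bool" where
  "DL m Exc v \<longleftrightarrow>
     (\<forall>E\<in>Exc. rk E < rk v \<and> mu m v \<le> mu m E \<and> mu m E \<le> mu m v + Ksq m
               \<longrightarrow> chi m E v \<le> 0) \<and>
     (\<forall>E\<in>Exc. rk E < rk v \<and> mu m v - Ksq m \<le> mu m E \<and> mu m E \<le> mu m v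
               \<longrightarrow> chi m v E \<le> 0)"

end

theory Submission
  imports Defs
begin

text \<open>Since \<open>V\<close> and \<open>v\<close> share rank and slope, they differ only in \<open>ch\<^sub>2\<close>, and both
  Euler pairings with a fixed \<open>E\<close> are affine in \<open>ch\<^sub>2\<close> with slope \<open>r(E) > 0\<close>.  The DL condition
  gives \<open>\<chi>(E,v) \<le> 0 \<le> \<chi>(E,V)\<close> (or the mirrored pair), hence \<open>ch\<^sub>2(V) \<ge> ch\<^sub>2(v)\<close>, which is
  \<open>\<Delta>(V) \<le> \<Delta>(v)\<close>.\<close>

lemma dotm_cong:
  "(\<And>i. i \<le> m \<Longrightarrow> a i = a' i) \<Longrightarrow> (\<And>i. i \<le> m \<Longrightarrow> b i = b' i) \<Longrightarrow> dotm m a b = dotm m a' b'"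
  unfolding dotm_def by (auto intro!: sum.cong)

lemma c1_eq_if_nu_eq:
  assumes "rk V = rk v" "rk v \<noteq> 0" "nu V i = nu v i"
  shows "c1 V i = c1 v i"
  using assms unfolding nu_def by (simp add: divide_cancel_right)

lemma chi_left_eq_add_ch2_diff:
  assumes "rk V = rk v" and "\<And>i. i \<le> m \<Longrightarrow> c1 V i = c1 v i"
  shows "chi m E V = chi m E v + real_of_int (rk E) * (ch2 V - ch2 v)"
proof -
  have "dotm m (\<lambda>i. real_of_int (rk E) * real_of_int (c1 V i) - real_of_int (rk V) * real_of_int (c1 E i))
          (\<lambda>i. - canon i / 2)
      = dotm m (\<lambda>i. real_of_int (rk E) * real_of_int (c1 v i) - real_of_int (rk v) * real_of_int (c1 E i))
          (\<lambda>i. - canon i / 2)"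
   and "dotm m (\<lambda>i. real_of_int (c1 E i)) (\<lambda>i. real_of_int (c1 V i))
      = dotm m (\<lambda>i. real_of_int (c1 E i)) (\<lambda>i. real_of_int (c1 v i))"
    by (rule dotm_cong; simp add: assms)+
  then show ?thesis unfolding chi_def Let_def by (simp add: assms(1) algebra_simps)
qed

lemma chi_right_eq_add_ch2_diff:
  assumes "rk V = rk v" and "\<And>i. i \<le> m \<Longrightarrow> c1 V i = c1 v i"
  shows "chi m V E = chi m v E + real_of_int (rk E) * (ch2 V - ch2 v)"
proof -
  have "dotm m (\<lambda>i. real_of_int (rk V) * real_of_int (c1 E i) - real_of_int (rk E) * real_of_int (c1 V i))
          (\<lambda>i. - canon i / 2)
      = dotm m (\<lambda>i. real_of_int (rk v) * real_of_int (c1 E i) - real_of_int (rk E) * real_of_int (c1 v i))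
          (\<lambda>i. - canon i / 2)"
   and "dotm m (\<lambda>i. real_of_int (c1 V i)) (\<lambda>i. real_of_int (c1 E i))
      = dotm m (\<lambda>i. real_of_int (c1 v i)) (\<lambda>i. real_of_int (c1 E i))"
    by (rule dotm_cong; simp add: assms)+
  then show ?thesis unfolding chi_def Let_def by (simp add: assms(1) algebra_simps)
qed

lemma Delta_le_if_ch2_ge:
  assumes "rk V = rk v" "rk v > 0" "\<And>i. i \<le> m \<Longrightarrow> nu V i = nu v i" "ch2 v \<le> ch2 V"
  shows "Delta m V \<le> Delta m v"
proof -
  have "dotm m (nu V) (nu V) = dotm m (nu v) (nu v)"
    by (rule dotm_cong) (simp_all add: assms(3))
  then show ?thesis unfolding Delta_def using assms(1,2,4) by (simp add: divide_right_mono)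
qed

theorem lemma7p10:
  fixes m :: nat and Exc :: "chern set" and v V E :: chern
  assumes "m \<le> 6"
    and exc_rank: "\<forall>F\<in>Exc. rk F > 0"
    and "DL m Exc v"
    and "rk V = rk v"
    and "\<forall>i\<le>m. nu V i = nu v i"
    and "E \<in> Exc"
    and "(rk E < rk v \<and> mu m v \<le> mu m E \<and> mu m E \<le> mu m v + Ksq m \<and> chi m E V \<ge> 0)
       \<or> (rk E < rk v \<and> mu m v - Ksq m \<le> mu m E \<and> mu m E \<le> mu m v \<and> chi m V E \<ge> 0)"
  shows "Delta m V \<le> Delta m v"
proof -
  have rk_E: "rk E > 0" using exc_rank \<open>E \<in> Exc\<close> by blast
  with assms(7) have rk_v: "rk v > 0" by auto
  have c1_eq: "c1 V i = c1 v i" if "i \<le> m" for i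
    using assms(4,5) rk_v that by (intro c1_eq_if_nu_eq) auto
  have "chi m E v \<le> 0 \<and> 0 \<le> chi m E V \<or> chi m v E \<le> 0 \<and> 0 \<le> chi m V E"
    using assms(3,6,7) unfolding DL_def by blast
  then have "0 \<le> real_of_int (rk E) * (ch2 V - ch2 v)"
    using chi_left_eq_add_ch2_diff[OF assms(4) c1_eq] chi_right_eq_add_ch2_diff[OF assms(4) c1_eq]
    by auto
  with rk_E have "ch2 v \<le> ch2 V" by (simp add: zero_le_mult_iff)
  then show ?thesis using Delta_le_if_ch2_ge assms(4,5) rk_v by blast
qed

end
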